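(* Let $X$ be a vector space with a separating family of seminorms $\{p_k\}_{k\in\mathbb{N}}$, equipped with the metric $d(x,y)=\max_{k\in\mathbb{N}}\Big\{2^{-k}\frac{p_k(x-y)}{1+p_k(x-y)}\Big\}$, and assume $(X,d)$ is complete. Let $\{A_n\}$ be an approximation scheme on $X$. Assume that there exist $(M_k)\subset[0,\infty)$, an infinite set $\mathbb{N}_0\subseteq\mathbb{N}$, elements $\{x_n\}_{n\in\mathbb{N}_0}\subseteq X$, $m_0\in\mathbb{N}$ and $\delta>0$ such that: (a) $p_k(x_n)\le M_k$ for all $k\in\mathbb{N}$ and $n\in\mathbb{N}_0$; (b) $E_{m_0}(x_n,A_n):=\inf_{a\in A_n}p_{m_0}(x_n-a)>\delta$ for all $n\in\mathbb{N}_0$. Then $\{A_n\}$ satisfies Shapiro's theorem on $X$.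
   Context: An approximation scheme on $X$ is a chain $A_0\subsetneq A_1\subsetneq\cdots\subsetneq X$ of subsets with: (A1) there is $K:\mathbb{N}\to\mathbb{N}$, $K(n)\ge n$, $A_n+A_n\subseteq A_{K(n)}$; (A2) $\lambda A_n\subseteq A_n$ for all scalars $\lambda$; (A3) $\bigcup_nA_n$ dense in $X$. $E(x,A)=\inf_{a\in A}d(x,a)$. $\{A_n\}$ satisfies Shapiro's theorem on $X$ if for every non-increasing sequence $\{\varepsilon_n\}$ of nonnegative reals tending to $0$ there exists $x\in X$ with $E(x,A_n)\neq\mathbf{O}(\varepsilon_n)$. *)

theory Defs
  imports "HOL-Analysis.Analysis" "HOL-Library.Landau_Symbols"
begin

definition seminorm :: "('a::real_vector \<Rightarrow> real) \<Rightarrow> bool" where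
  "seminorm q \<longleftrightarrow> (\<forall>x. 0 \<le> q x) \<and> (\<forall>x y. q (x + y) \<le> q x + q y)
      \<and> (\<forall>c x. q (c *\<^sub>R x) = \<bar>c\<bar> * q x)"

definition separating_seminorms :: "(nat \<Rightarrow> 'a::real_vector \<Rightarrow> real) \<Rightarrow> bool" where
  "separating_seminorms p \<longleftrightarrow> (\<forall>k. seminorm (p k)) \<and> (\<forall>x. x \<noteq> 0 \<longrightarrow> (\<exists>k. p k x \<noteq> 0))"

definition sn_dist :: "(nat \<Rightarrow> 'a::real_vector \<Rightarrow> real) \<Rightarrow> 'a \<Rightarrow> 'a \<Rightarrow> real" where
  "sn_dist p x y = (SUP k. (1/2) ^ k * (p k (x - y) / (1 + p k (x - y))))"

definition sn_complete :: "(nat \<Rightarrow> 'a::real_vector \<Rightarrow> real) \<Rightarrow> bool" where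
  "sn_complete p \<longleftrightarrow> (\<forall>s::nat \<Rightarrow> 'a.
      (\<forall>e>0. \<exists>N. \<forall>m\<ge>N. \<forall>n\<ge>N. sn_dist p (s m) (s n) < e) \<longrightarrow>
      (\<exists>l. (\<lambda>n. sn_dist p (s n) l) \<longlonglongrightarrow> 0))"

definition approx_scheme :: "(nat \<Rightarrow> 'a::real_vector \<Rightarrow> real) \<Rightarrow> (nat \<Rightarrow> 'a set) \<Rightarrow> bool" where
  "approx_scheme p A \<longleftrightarrow>
     (\<forall>n. A n \<subset> A (Suc n)) \<and>
     (\<exists>K::nat \<Rightarrow> nat. \<forall>n. n \<le> K n \<and> {a + b | a b. a \<in> A n \<and> b \<in> A n} \<subseteq> A (K n)) \<and>
     (\<forall>n c. (\<lambda>a. c *\<^sub>R a) ` A n \<subseteq> A n) \<and>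
     (\<forall>x. \<forall>e>0. \<exists>y\<in>(\<Union>n. A n). sn_dist p x y < e)"

definition best_err :: "(nat \<Rightarrow> 'a::real_vector \<Rightarrow> real) \<Rightarrow> 'a \<Rightarrow> 'a set \<Rightarrow> real" where
  "best_err p x S = (INF a\<in>S. sn_dist p x a)"

definition shapiro :: "(nat \<Rightarrow> 'a::real_vector \<Rightarrow> real) \<Rightarrow> (nat \<Rightarrow> 'a set) \<Rightarrow> bool" where
  "shapiro p A \<longleftrightarrow> (\<forall>eps::nat \<Rightarrow> real. decseq eps \<and> (\<forall>n. 0 \<le> eps n) \<and> eps \<longlonglongrightarrow> 0 \<longrightarrow>
       (\<exists>x. (\<lambda>n. best_err p x (A n)) \<notin> O(eps)))"

end

theory Submission
  imports Defs
begin

(*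
  Fix eps tending to 0 and a small ratio 0 < r <= 1/2.  Build l as a lacunary series
  l = sum_J r^J x(m_J), choosing one term at a time indices n_J increasing and m_J in N0 such that
  A(n_J) approximates the partial sum S_J up to r^J delta/4, eps(n_J) is already tiny, and
  m_J >= K(n_J), where A(n) + A(n) is contained in A(K n).  Scaled differences of elements of A(n_J)
  then lie in A(m_J), which stays p_m0-distance more than delta away from x(m_J); so the new term
  r^J x(m_J) cannot be matched by A(n_J), and since the tail after it is negligible,
  p_m0(l - a) >= r^J delta/2 for every a in A(n_J).  The series converges by completeness because
  the x(m_J) are bounded in every seminorm.  Hence E(l, A(n_J)) exceeds J |eps(n_J)| for all J.
*)

lemma seminorm_nonneg: "seminorm q \<Longrightarrow> 0 \<le> q x"
  by (simp add: seminorm_def)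

lemma seminorm_triangle: "seminorm q \<Longrightarrow> q (x + y) \<le> q x + q y"
  by (simp add: seminorm_def)

lemma seminorm_scaleR: "seminorm q \<Longrightarrow> q (c *\<^sub>R x) = \<bar>c\<bar> * q x"
  by (simp add: seminorm_def)

lemma seminorm_minus: "seminorm q \<Longrightarrow> q (- x) = q x"
  using seminorm_scaleR[of q "-1" x] by simp

lemma seminorm_minus_commute: "seminorm q \<Longrightarrow> q (x - y) = q (y - x)"
  using seminorm_minus[of q "x - y"] by simp

lemma seminorm_sum: "seminorm q \<Longrightarrow> q (sum f S) \<le> (\<Sum>i\<in>S. q (f i))"
proof (induction S rule: infinite_finite_induct)
  case (insert i F)
  then show ?case using seminorm_triangle[of q "f i" "sum f F"] by simp
qed (use seminorm_scaleR[of q 0 0] in simp_all)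

lemma frac_one_plus_le_iff:
  fixes s t :: real
  assumes "0 \<le> s" "0 \<le> t"
  shows "s / (1 + s) \<le> t / (1 + t) \<longleftrightarrow> s \<le> t"
  using assms by (simp add: divide_simps algebra_simps)

lemma sn_dist_term_le:
  assumes "\<forall>k. seminorm (p k)"
  shows "(1/2) ^ k * (p k (u - v) / (1 + p k (u - v))) \<le> sn_dist p u v"
  unfolding sn_dist_def
proof (rule cSUP_upper[OF UNIV_I], rule bdd_aboveI2)
  fix i
  have "0 \<le> p i (u - v)" using assms seminorm_nonneg by blast
  then show "(1/2::real) ^ i * (p i (u - v) / (1 + p i (u - v))) \<le> 1"
    by (intro mult_le_one) (auto simp: power_le_one)
qed

lemma sn_dist_le:
  assumes "\<And>k. (1/2) ^ k * (p k (u - v) / (1 + p k (u - v))) \<le> e"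
  shows "sn_dist p u v \<le> e"
  unfolding sn_dist_def by (rule cSUP_least) (use assms in auto)

lemma seminorm_less_if_sn_dist_less:
  assumes "\<forall>k. seminorm (p k)" "0 < g" "sn_dist p u v < (1/2) ^ k * (g / (1 + g))"
  shows "p k (u - v) < g"
proof -
  have "(1/2) ^ k * (p k (u - v) / (1 + p k (u - v))) < (1/2) ^ k * (g / (1 + g))"
    using sn_dist_term_le[OF assms(1), of k u v] assms(3) by linarith
  then have "p k (u - v) / (1 + p k (u - v)) < g / (1 + g)"
    by (rule mult_left_less_imp_less) simp
  then show ?thesis
    using frac_one_plus_le_iff[of g "p k (u - v)"] assms seminorm_nonneg by force
qed

lemma seminorm_tendsto_if_sn_dist_tendsto:
  assumes "\<forall>k. seminorm (p k)" "(\<lambda>n. sn_dist p (s n) l) \<longlonglongrightarrow> 0"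
  shows "(\<lambda>n. p k (s n - l)) \<longlonglongrightarrow> 0"
proof (rule order_tendstoI)
  fix g :: real assume "0 < g"
  then have "\<forall>\<^sub>F n in sequentially. sn_dist p (s n) l < (1/2) ^ k * (g / (1 + g))"
    using assms(2) by (intro order_tendstoD(2)) auto
  then show "\<forall>\<^sub>F n in sequentially. p k (s n - l) < g"
    by eventually_elim (use seminorm_less_if_sn_dist_less[OF assms(1) \<open>0 < g\<close>] in blast)
next
  fix g :: real assume "g < 0"
  then show "\<forall>\<^sub>F n in sequentially. g < p k (s n - l)"
    using assms(1) seminorm_nonneg by (intro always_eventually allI) (blast intro: less_le_trans)
qed

lemma sn_Cauchy_if_seminorm_Cauchy:
  fixes s :: "nat \<Rightarrow> 'a::real_vector"
  assumes "\<forall>k. seminorm (p k)"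
    and Cauchy: "\<And>k e. 0 < e \<Longrightarrow> \<exists>N. \<forall>m\<ge>N. \<forall>n\<ge>N. p k (s m - s n) < e"
  shows "\<forall>e>0. \<exists>N. \<forall>m\<ge>N. \<forall>n\<ge>N. sn_dist p (s m) (s n) < e"
proof (intro allI impI)
  fix e :: real assume "0 < e"
  obtain K0 where K0: "(1/2::real) ^ K0 < e/2"
    using real_arch_pow_inv[of "e/2" "1/2::real"] \<open>0 < e\<close> by auto
  have "\<forall>k. \<exists>N. \<forall>m\<ge>N. \<forall>n\<ge>N. p k (s m - s n) < e/2"
    using Cauchy[of "e/2"] \<open>0 < e\<close> by simp
  then obtain N where N: "\<And>k m n. N k \<le> m \<Longrightarrow> N k \<le> n \<Longrightarrow> p k (s m - s n) < e/2"
    by metis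
  have half: "sn_dist p (s m) (s n) \<le> e/2" if "Max (N ` {..K0}) \<le> m" "Max (N ` {..K0}) \<le> n" for m n
  proof (rule sn_dist_le)
    fix k
    define t where "t = p k (s m - s n)"
    have "0 \<le> t" using assms(1) seminorm_nonneg t_def by blast
    show "(1/2) ^ k * (t / (1 + t)) \<le> e/2"
    proof (cases "k \<le> K0")
      case True
      then have "N k \<le> Max (N ` {..K0})" by simp
      then have "t < e/2" using N that t_def by (meson order_trans)
      have "(1/2) ^ k * (t / (1 + t)) \<le> t / (1 + t)"
        using \<open>0 \<le> t\<close> by (intro mult_left_le_one_le) (auto simp: power_le_one)
      also have "\<dots> \<le> t"
        using \<open>0 \<le> t\<close> by (simp add: divide_simps algebra_simps)
      finally show ?thesis using \<open>t < e/2\<close> by linarith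
    next
      case False
      have "(1/2::real) ^ k \<le> (1/2) ^ K0" using False by (intro power_decreasing) auto
      moreover have "(1/2::real) ^ k * (t / (1 + t)) \<le> (1/2) ^ k"
        using \<open>0 \<le> t\<close> by (intro mult_left_le) auto
      ultimately show ?thesis using K0 by linarith
    qed
  qed
  show "\<exists>N. \<forall>m\<ge>N. \<forall>n\<ge>N. sn_dist p (s m) (s n) < e"
  proof (intro exI allI impI)
    fix m n assume "Max (N ` {..K0}) \<le> m" "Max (N ` {..K0}) \<le> n"
    then show "sn_dist p (s m) (s n) < e"
      using half[of m n] \<open>0 < e\<close> by linarith
  qed
qed

lemma geometric_sum_le:
  fixes \<theta> :: real
  assumes "0 \<le> \<theta>" "\<theta> \<le> 1/2" "n \<le> m"
  shows "(\<Sum>j\<in>{n..<m}. \<theta> ^ j) \<le> 2 * \<theta> ^ n - 2 * \<theta> ^ m"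
  using assms(3)
proof (induction m rule: dec_induct)
  case (step m)
  have "\<theta> * \<theta> ^ m \<le> \<theta> ^ m / 2"
    using assms(1,2) mult_right_mono[of \<theta> "1/2" "\<theta> ^ m"] by simp
  then show ?case using step by simp
qed simp

lemma seminorm_geometric_sum_diff_le:
  assumes "seminorm q" "0 \<le> \<theta>" "\<theta> \<le> 1/2" "\<And>j. q (y j) \<le> C" "n \<le> m"
  shows "q ((\<Sum>j<m. \<theta> ^ j *\<^sub>R y j) - (\<Sum>j<n. \<theta> ^ j *\<^sub>R y j)) \<le> 2 * \<theta> ^ n * C"
proof -
  have "0 \<le> C" using assms(1,4) seminorm_nonneg order_trans by blast
  have "(\<Sum>j<m. \<theta> ^ j *\<^sub>R y j) - (\<Sum>j<n. \<theta> ^ j *\<^sub>R y j) = (\<Sum>j\<in>{n..<m}. \<theta> ^ j *\<^sub>R y j)"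
    using sum_diff_nat_ivl[of 0 n m] assms(5) by (simp add: lessThan_atLeast0)
  then have "q ((\<Sum>j<m. \<theta> ^ j *\<^sub>R y j) - (\<Sum>j<n. \<theta> ^ j *\<^sub>R y j))
      \<le> (\<Sum>j\<in>{n..<m}. q (\<theta> ^ j *\<^sub>R y j))"
    using seminorm_sum[OF assms(1)] by simp
  also have "\<dots> \<le> (\<Sum>j\<in>{n..<m}. \<theta> ^ j * C)"
    using assms by (intro sum_mono) (simp add: seminorm_scaleR mult_left_mono)
  also have "\<dots> = C * (\<Sum>j\<in>{n..<m}. \<theta> ^ j)"
    by (simp add: sum_distrib_left mult.commute)
  also have "\<dots> \<le> C * (2 * \<theta> ^ n)"
    using geometric_sum_le[OF assms(2,3,5)] zero_le_power[OF assms(2), of m] \<open>0 \<le> C\<close>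
    by (intro mult_left_mono) auto
  finally show ?thesis by (simp add: mult.commute)
qed

lemma sn_complete_geometric_series:
  fixes y :: "nat \<Rightarrow> 'a::real_vector"
  assumes sem: "\<forall>k. seminorm (p k)" and "sn_complete p"
    and "0 < \<theta>" "\<theta> \<le> 1/2" and bound: "\<And>k j. p k (y j) \<le> M k"
  shows "\<exists>l. \<forall>k J. p k (l - (\<Sum>j<J. \<theta> ^ j *\<^sub>R y j)) \<le> 2 * \<theta> ^ J * M k"
proof -
  define S where "S J = (\<Sum>j<J. \<theta> ^ j *\<^sub>R y j)" for J
  have diff: "p k (S m - S n) \<le> 2 * \<theta> ^ n * M k" if "n \<le> m" for k m n
    unfolding S_def
    using seminorm_geometric_sum_diff_le[of "p k" \<theta> y "M k"] sem bound assms(3,4) that by simp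
  have "\<exists>N. \<forall>m\<ge>N. \<forall>n\<ge>N. p k (S m - S n) < e" if "0 < e" for k e
  proof -
    have "(\<lambda>N. 2 * \<theta> ^ N * M k) \<longlonglongrightarrow> 2 * 0 * M k"
      using assms(3,4) by (intro tendsto_intros LIMSEQ_power_zero) auto
    then obtain N where N: "2 * \<theta> ^ N * M k < e"
      using \<open>0 < e\<close> by (metis (no_types, lifting) eventually_sequentially le_refl
          mult_zero_left mult_zero_right order_tendstoD(2))
    have "0 \<le> M k" using sem bound seminorm_nonneg order_trans by blast
    have "p k (S m - S n) < e" if "N \<le> m" "N \<le> n" for m n
    proof -
      have "p k (S m - S n) \<le> 2 * \<theta> ^ min m n * M k"
        using diff[of n m k] diff[of m n k] seminorm_minus_commute[of "p k" "S m"] sem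
        by (cases "n \<le> m") (auto simp: min_def)
      also have "\<dots> \<le> 2 * \<theta> ^ N * M k"
        using that assms(3,4) \<open>0 \<le> M k\<close> by (intro mult_right_mono mult_left_mono power_decreasing) auto
      finally show ?thesis using N by linarith
    qed
    then show ?thesis by blast
  qed
  then obtain l where l: "(\<lambda>n. sn_dist p (S n) l) \<longlonglongrightarrow> 0"
    using \<open>sn_complete p\<close> sn_Cauchy_if_seminorm_Cauchy[OF sem] unfolding sn_complete_def by blast
  have "p k (l - S J) \<le> 2 * \<theta> ^ J * M k" for k J
  proof (rule tendsto_le[OF sequentially_bot])
    show "(\<lambda>n. p k (S n - l) + 2 * \<theta> ^ J * M k) \<longlonglongrightarrow> 2 * \<theta> ^ J * M k"
      using tendsto_add[OF seminorm_tendsto_if_sn_dist_tendsto[OF sem l] tendsto_const] by simp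
    show "\<forall>\<^sub>F n in sequentially. p k (l - S J) \<le> p k (S n - l) + 2 * \<theta> ^ J * M k"
      unfolding eventually_sequentially
    proof (intro exI allI impI)
      fix n assume "J \<le> n"
      have "p k (l - S J) \<le> p k (l - S n) + p k (S n - S J)"
        using seminorm_triangle[of "p k" "l - S n" "S n - S J"] sem by simp
      then show "p k (l - S J) \<le> p k (S n - l) + 2 * \<theta> ^ J * M k"
        using diff[OF \<open>J \<le> n\<close>, of k] seminorm_minus_commute[of "p k" l] sem by simp
    qed
  qed (rule tendsto_const)
  then show ?thesis unfolding S_def by blast
qed

lemma partial_sum_choice:
  fixes g :: "nat \<Rightarrow> nat \<Rightarrow> 'a::comm_monoid_add"
    and R :: "nat \<Rightarrow> 'a \<Rightarrow> nat \<Rightarrow> nat \<Rightarrow> bool"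
  assumes step: "\<And>J S lo. \<exists>n m. lo < n \<and> R J S n m"
  shows "\<exists>nn mm. strict_mono nn \<and> (\<forall>J. R J (\<Sum>j<J. g j (mm j)) (nn J) (mm J))"
proof -
  define P where "P J s \<longleftrightarrow> R J (fst s) (fst (snd s)) (snd (snd s)) \<and> (J = 0 \<longrightarrow> fst s = 0)"
    for J and s :: "'a \<times> nat \<times> nat"
  define Q where "Q J s s' \<longleftrightarrow> fst (snd s) < fst (snd s') \<and> fst s' = fst s + g J (snd (snd s))"
    for J and s s' :: "'a \<times> nat \<times> nat"
  have "\<exists>s. P 0 s"
    using step[where J=0 and S=0 and lo=0] by (auto simp: P_def)
  moreover have "\<exists>s'. P (Suc J) s' \<and> Q J s s'" for J s
    using step[where J="Suc J" and S="fst s + g J (snd (snd s))" and lo="fst (snd s)"]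
    by (auto simp: P_def Q_def)
  ultimately obtain f where f: "\<And>J. P J (f J) \<and> Q J (f J) (f (Suc J))"
    using dependent_nat_choice[of P Q] by blast
  have sums: "fst (f J) = (\<Sum>j<J. g j (snd (snd (f j))))" for J
    by (induction J) (use f in \<open>auto simp: P_def Q_def\<close>)
  show ?thesis
  proof (intro exI conjI allI)
    show "strict_mono (\<lambda>J. fst (snd (f J)))"
      using f by (simp add: strict_mono_Suc_iff Q_def)
    show "R J (\<Sum>j<J. g j (snd (snd (f j)))) (fst (snd (f J))) (snd (snd (f J)))" for J
      using f[of J] by (simp add: P_def flip: sums)
  qed
qed

lemma not_bigo_if_unbounded_ratio_on_subseq:
  fixes f g :: "nat \<Rightarrow> real"
  assumes "strict_mono nn" and ratio: "\<And>J. real J * \<bar>g (nn J)\<bar> < \<bar>f (nn J)\<bar>"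
  shows "f \<notin> O(g)"
proof
  assume "f \<in> O(g)"
  then obtain c where "\<forall>\<^sub>F n in sequentially. \<bar>f n\<bar> \<le> c * \<bar>g n\<bar>"
    by (auto elim: landau_o.bigE)
  then obtain N where N: "\<And>n. N \<le> n \<Longrightarrow> \<bar>f n\<bar> \<le> c * \<bar>g n\<bar>"
    by (auto simp: eventually_sequentially)
  define J where "J = max N (nat \<lceil>c\<rceil>)"
  have "N \<le> nn J" using seq_suble[OF assms(1), of J] by (simp add: J_def)
  then have "\<bar>f (nn J)\<bar> \<le> c * \<bar>g (nn J)\<bar>" by (rule N)
  moreover have "c \<le> real J"
    using real_nat_ceiling_ge[of c] by (simp add: J_def)
  then have "c * \<bar>g (nn J)\<bar> \<le> real J * \<bar>g (nn J)\<bar>"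
    by (rule mult_right_mono) simp
  ultimately show False using ratio[of J] by linarith
qed

lemma approx_scheme_mono: "approx_scheme p A \<Longrightarrow> n \<le> n' \<Longrightarrow> A n \<subseteq> A n'"
  unfolding approx_scheme_def by (rule lift_Suc_mono_le[of A]) auto

lemma approx_scheme_scaled_diff:
  assumes "approx_scheme p A"
  shows "\<exists>K. \<forall>n. \<forall>a\<in>A n. \<forall>b\<in>A n. \<forall>c. c *\<^sub>R (a - b) \<in> A (K n)"
proof -
  obtain K where sums: "\<forall>n. n \<le> K n \<and> {a + b | a b. a \<in> A n \<and> b \<in> A n} \<subseteq> A (K n)"
    using assms unfolding approx_scheme_def by (elim conjE exE)
  have scale: "\<And>n c a. a \<in> A n \<Longrightarrow> c *\<^sub>R a \<in> A n"
    using assms unfolding approx_scheme_def by blast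
  have "c *\<^sub>R (a - b) \<in> A (K n)" if "a \<in> A n" "b \<in> A n" for n a b c
  proof -
    have "a + (-1) *\<^sub>R b \<in> {a + b | a b. a \<in> A n \<and> b \<in> A n}"
      using scale[OF that(2)] that(1) by blast
    then have "a - b \<in> A (K n)" using sums by auto
    then show ?thesis using scale by blast
  qed
  then show ?thesis by blast
qed

lemma approx_scheme_eventually_close:
  assumes "approx_scheme p A" "\<forall>k. seminorm (p k)" "0 < g"
  shows "\<forall>\<^sub>F n in sequentially. \<exists>b\<in>A n. p k (z - b) < g"
proof -
  have "0 < (1/2::real) ^ k * (g / (1 + g))" using \<open>0 < g\<close> by simp
  then obtain b where "b \<in> (\<Union>n. A n)" "sn_dist p z b < (1/2) ^ k * (g / (1 + g))"
    using assms(1) unfolding approx_scheme_def by meson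
  then obtain r where "b \<in> A r" "p k (z - b) < g"
    using seminorm_less_if_sn_dist_less[OF assms(2,3)] by blast
  then have "\<exists>b\<in>A n. p k (z - b) < g" if "r \<le> n" for n
    using approx_scheme_mono[OF assms(1) that] by blast
  then show ?thesis
    unfolding eventually_sequentially by blast
qed

lemma less_seminorm_if_less_INF:
  assumes "seminorm q" "\<delta> < (INF a\<in>S. q (y - a))" "z \<in> S"
  shows "\<delta> < q (y - z)"
proof -
  have "bdd_below ((\<lambda>a. q (y - a)) ` S)"
    using seminorm_nonneg[OF assms(1)] by (intro bdd_belowI2) auto
  then have "(INF a\<in>S. q (y - a)) \<le> q (y - z)"
    by (rule cINF_lower[OF _ assms(3)])
  with assms(2) show ?thesis by linarith
qed

lemma best_err_ge_if_seminorm_ge: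
  assumes "\<forall>k. seminorm (p k)" "S \<noteq> {}" "0 \<le> r" "\<And>a. a \<in> S \<Longrightarrow> r \<le> p k (l - a)"
  shows "(1/2) ^ k * (r / (1 + r)) \<le> best_err p l S"
  unfolding best_err_def
proof (rule cINF_greatest[OF assms(2)])
  fix a assume "a \<in> S"
  then have "(1/2) ^ k * (r / (1 + r)) \<le> (1/2) ^ k * (p k (l - a) / (1 + p k (l - a)))"
    using assms frac_one_plus_le_iff[of r "p k (l - a)"] seminorm_nonneg by (intro mult_left_mono) auto
  also have "\<dots> \<le> sn_dist p l a"
    by (rule sn_dist_term_le[OF assms(1)])
  finally show "(1/2) ^ k * (r / (1 + r)) \<le> sn_dist p l a" .
qed

lemma seminorm_ge_if_scaled_far:
  assumes "seminorm q" "0 < t"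
    and far: "\<delta> < q (y - (1/t) *\<^sub>R (a - b))"
    and "q (S - b) \<le> t * \<delta> / 4" "q (l - (S + t *\<^sub>R y)) \<le> t * \<delta> / 4"
  shows "t * \<delta> / 2 \<le> q (l - a)"
proof -
  have "t * \<delta> < q (t *\<^sub>R y - (a - b))"
    using far seminorm_scaleR[OF assms(1), of t "y - (1/t) *\<^sub>R (a - b)"] \<open>0 < t\<close>
    by (simp add: algebra_simps)
  also have "t *\<^sub>R y - (a - b) = (l - a) + (- (S - b) + - (l - (S + t *\<^sub>R y)))"
    by (simp add: algebra_simps)
  also have "q \<dots> \<le> q (l - a) + q (- (S - b) + - (l - (S + t *\<^sub>R y)))"
    by (rule seminorm_triangle[OF assms(1)])
  finally have "t * \<delta> < q (l - a) + q (- (S - b) + - (l - (S + t *\<^sub>R y)))" .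
  moreover have "q (- (S - b) + - (l - (S + t *\<^sub>R y))) \<le> q (S - b) + q (l - (S + t *\<^sub>R y))"
    using seminorm_triangle[OF assms(1), of "- (S - b)" "- (l - (S + t *\<^sub>R y))"]
    unfolding seminorm_minus[OF assms(1)] .
  ultimately show ?thesis using assms(4,5) by linarith
qed

locale shapiro_hypotheses =
  fixes p :: "nat \<Rightarrow> 'a::real_vector \<Rightarrow> real" and A :: "nat \<Rightarrow> 'a set"
    and M :: "nat \<Rightarrow> real" and N0 :: "nat set" and x :: "nat \<Rightarrow> 'a"
    and m0 :: nat and \<delta> :: real and K :: "nat \<Rightarrow> nat"
  assumes seminorms: "\<forall>k. seminorm (p k)"
    and complete: "sn_complete p"
    and scheme: "approx_scheme p A"
    and scaled_diff: "\<And>n a b c. a \<in> A n \<Longrightarrow> b \<in> A n \<Longrightarrow> c *\<^sub>R (a - b) \<in> A (K n)"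
    and bound_nonneg: "\<And>k. 0 \<le> M k"
    and infinite_N0: "infinite N0"
    and delta_pos: "0 < \<delta>"
    and bounded: "\<And>k n. n \<in> N0 \<Longrightarrow> p k (x n) \<le> M k"
    and far: "\<And>n. n \<in> N0 \<Longrightarrow> \<delta> < (INF a\<in>A n. p m0 (x n - a))"
begin

text \<open>Small enough that the tail after the \<open>J\<close>-th term, at most \<open>2 * ratio ^ Suc J * M m0\<close>,
  stays below \<open>radius J / 2\<close>.\<close>
definition ratio :: real where
  "ratio = min (1/2) (\<delta> / (8 * (M m0 + 1)))"

definition radius :: "nat \<Rightarrow> real" where
  "radius J = ratio ^ J * \<delta> / 2"

definition gap :: "nat \<Rightarrow> real" where
  "gap J = (1/2) ^ m0 * (radius J / (1 + radius J))"

lemma ratio_pos: "0 < ratio"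
  using delta_pos bound_nonneg[of m0] by (simp add: ratio_def)

lemma ratio_le_half: "ratio \<le> 1/2"
  unfolding ratio_def by (rule min.cobounded1)

lemma ratio_times_bound: "2 * ratio * M m0 \<le> \<delta> / 4"
proof -
  have "ratio * M m0 \<le> \<delta> / (8 * (M m0 + 1)) * (M m0 + 1)"
    using bound_nonneg[of m0] delta_pos
    by (intro mult_mono) (auto simp: ratio_def)
  also have "\<dots> = \<delta> / 8"
    using bound_nonneg[of m0] by (simp add: field_simps add_pos_nonneg)
  finally show ?thesis by linarith
qed

lemma radius_pos: "0 < radius J"
  using ratio_pos delta_pos by (simp add: radius_def)

lemma gap_pos: "0 < gap J"
  using radius_pos[of J] by (simp add: gap_def)

definition admissible :: "(nat \<Rightarrow> real) \<Rightarrow> nat \<Rightarrow> 'a \<Rightarrow> nat \<Rightarrow> nat \<Rightarrow> bool" where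
  "admissible eps J S n m \<longleftrightarrow> m \<in> N0 \<and> K n \<le> m \<and> (\<exists>b\<in>A n. p m0 (S - b) < radius J / 2)
      \<and> (real J + 1) * \<bar>eps n\<bar> < gap J"

lemma admissible_exists:
  assumes "eps \<longlonglongrightarrow> 0"
  shows "\<exists>n m. lo < n \<and> admissible eps J S n m"
proof -
  have "\<forall>\<^sub>F n in sequentially. \<bar>eps n\<bar> < gap J / (real J + 1)"
    using tendsto_rabs_zero[OF assms] gap_pos[of J] by (intro order_tendstoD(2)) auto
  moreover have "\<forall>\<^sub>F n in sequentially. \<exists>b\<in>A n. p m0 (S - b) < radius J / 2"
    using radius_pos[of J] by (intro approx_scheme_eventually_close[OF scheme seminorms]) simp
  ultimately have "\<forall>\<^sub>F n in sequentially. lo < n \<and> (\<exists>b\<in>A n. p m0 (S - b) < radius J / 2)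
      \<and> (real J + 1) * \<bar>eps n\<bar> < gap J"
    using eventually_gt_at_top[of lo]
    by eventually_elim (simp add: field_simps)
  then obtain N where N: "\<And>n. N \<le> n \<Longrightarrow> lo < n \<and> (\<exists>b\<in>A n. p m0 (S - b) < radius J / 2)
      \<and> (real J + 1) * \<bar>eps n\<bar> < gap J"
    unfolding eventually_sequentially by blast
  note n = N[OF order.refl]
  obtain m where "m \<in> N0" "K N \<le> m"
    using infinite_N0 unfolding infinite_nat_iff_unbounded_le by blast
  with n show ?thesis unfolding admissible_def by auto
qed

lemma best_err_ge_gap:
  assumes adm: "admissible eps J (\<Sum>j<J. ratio ^ j *\<^sub>R x (mm j)) n (mm J)"
    and tail: "p m0 (l - (\<Sum>j<Suc J. ratio ^ j *\<^sub>R x (mm j))) \<le> 2 * ratio ^ Suc J * M m0"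
  shows "gap J \<le> best_err p l (A n)"
proof -
  define S where "S = (\<Sum>j<J. ratio ^ j *\<^sub>R x (mm j))"
  obtain b where b: "b \<in> A n" "p m0 (S - b) < radius J / 2"
    and m: "mm J \<in> N0" "K n \<le> mm J"
    using adm unfolding admissible_def S_def by (elim conjE bexE) simp
  have "p m0 (l - (S + ratio ^ J *\<^sub>R x (mm J))) \<le> ratio ^ J * (2 * ratio * M m0)"
    using tail by (simp add: S_def algebra_simps)
  also have "\<dots> \<le> radius J / 2"
    using mult_left_mono[OF ratio_times_bound, of "ratio ^ J"] ratio_pos by (simp add: radius_def)
  finally have tail': "p m0 (l - (S + ratio ^ J *\<^sub>R x (mm J))) \<le> radius J / 2" .
  have "radius J \<le> p m0 (l - a)" if "a \<in> A n" for a
  proof -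
    have "(1 / ratio ^ J) *\<^sub>R (a - b) \<in> A (mm J)"
      using scaled_diff[OF that b(1)] approx_scheme_mono[OF scheme m(2)] by (rule subsetD[rotated])
    then have "\<delta> < p m0 (x (mm J) - (1 / ratio ^ J) *\<^sub>R (a - b))"
      using seminorms far[OF m(1)] by (intro less_seminorm_if_less_INF) auto
    then show ?thesis
      using seminorm_ge_if_scaled_far[of "p m0" "ratio ^ J" \<delta> "x (mm J)" a b S l] seminorms ratio_pos
        less_imp_le[OF b(2)] tail' by (simp add: radius_def)
  qed
  moreover have "A n \<noteq> {}" using b(1) by blast
  ultimately show ?thesis
    unfolding gap_def using radius_pos[of J] by (intro best_err_ge_if_seminorm_ge[OF seminorms]) auto
qed

lemma badly_approximable_element:
  assumes "eps \<longlonglongrightarrow> 0"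
  shows "\<exists>l. (\<lambda>n. best_err p l (A n)) \<notin> O(eps)"
proof -
  obtain nn mm where "strict_mono nn"
    and adm: "\<And>J. admissible eps J (\<Sum>j<J. ratio ^ j *\<^sub>R x (mm j)) (nn J) (mm J)"
    using partial_sum_choice[of "admissible eps" "\<lambda>j m. ratio ^ j *\<^sub>R x m", OF admissible_exists[OF assms]]
    by blast
  have "\<And>k j. p k (x (mm j)) \<le> M k"
    using adm bounded unfolding admissible_def by blast
  then obtain l where tail: "\<And>k J. p k (l - (\<Sum>j<J. ratio ^ j *\<^sub>R x (mm j))) \<le> 2 * ratio ^ J * M k"
    using sn_complete_geometric_series[OF seminorms complete ratio_pos ratio_le_half, of "\<lambda>j. x (mm j)" M]
    by blast
  have "real J * \<bar>eps (nn J)\<bar> < \<bar>best_err p l (A (nn J))\<bar>" for J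
  proof -
    have "real J * \<bar>eps (nn J)\<bar> < gap J"
      using adm[of J] unfolding admissible_def by (smt (verit) abs_ge_zero mult_right_mono)
    also have "\<dots> \<le> best_err p l (A (nn J))"
      using best_err_ge_gap[OF adm tail] .
    finally show ?thesis by linarith
  qed
  then have "(\<lambda>n. best_err p l (A n)) \<notin> O(eps)"
    by (rule not_bigo_if_unbounded_ratio_on_subseq[OF \<open>strict_mono nn\<close>])
  then show ?thesis by blast
qed

end

theorem mainTheorem5:
  fixes p :: "nat \<Rightarrow> 'a::real_vector \<Rightarrow> real"
    and A :: "nat \<Rightarrow> 'a set"
    and M :: "nat \<Rightarrow> real"
    and N0 :: "nat set"
    and x :: "nat \<Rightarrow> 'a"
    and m0 :: nat
    and \<delta> :: real
  assumes "separating_seminorms p"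
    and "sn_complete p"
    and "approx_scheme p A"
    and "\<forall>k. 0 \<le> M k"
    and "infinite N0"
    and "\<delta> > 0"
    and "\<forall>k. \<forall>n\<in>N0. p k (x n) \<le> M k"
    and "\<forall>n\<in>N0. (INF a\<in>A n. p m0 (x n - a)) > \<delta>"
  shows "shapiro p A"
proof -
  obtain K where "\<And>n a b c. a \<in> A n \<Longrightarrow> b \<in> A n \<Longrightarrow> c *\<^sub>R (a - b) \<in> A (K n)"
    using approx_scheme_scaled_diff[OF assms(3)] by blast
  then interpret shapiro_hypotheses p A M N0 x m0 \<delta> K
    using assms by unfold_locales (auto simp: separating_seminorms_def)
  show ?thesis
    unfolding shapiro_def using badly_approximable_element by blast
qed

end
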